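(* Let $X$ be a real $n\times p$ matrix ($p<n$) of full rank with rows $x_1^\top,\dots,x_n^\top$, and define $$\kappa(X)=\max\Big\{|M| : M\subset\{1,\dots,n\},\ \exists\,\theta\in\mathbb{R}^p \text{ with } X\theta\neq 0 \text{ and } x_i^\top\theta=0\ \forall i\in M\Big\}.$$ Let $f\in\mathbb{R}^p$, $e\in\mathbb{R}^n$, $y=Xf+e$, let $F$ be a real matrix with $n$ columns such that $\ker(F)=\operatorname{ran}(X)$, and set $\tilde y=Fy$. If $\|e\|_0\leq (n-\kappa(X)-1)/2$, then $e$ is the unique solution of the problem $$\min_{s\in\mathbb{R}^n}\ \|s\|_0 \quad\text{subject to}\quad Fs=\tilde y.$$
   Context: For $x\in\mathbb{R}^n$, $\|x\|_0$ denotes the number of nonzero components of $x$, i.e. $\|x\|_0=|\{i\in\{1,\dots,n\}: x_i\neq 0\}|$. *)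

theory Defs
  imports "HOL-Analysis.Analysis"
begin

definition l0norm :: "real ^ 'n \<Rightarrow> nat" where
  "l0norm x = card {i. x $ i \<noteq> 0}"

definition kappa :: "real ^ 'p ^ 'n \<Rightarrow> nat" where
  "kappa X = Max {card M | M :: 'n set.
      \<exists>\<theta>. X *v \<theta> \<noteq> 0 \<and> (\<forall>i\<in>M. row i X \<bullet> \<theta> = 0)}"

end

theory Submission
  imports Defs
begin

text \<open>Two vectors with the same image under F differ by some d = X\<theta> \<noteq> 0, since ker F = ran X.
  The zero set of d is a set of rows orthogonal to \<theta>, so it has at most \<kappa>(X) elements and d has
  at least n - \<kappa>(X) nonzero entries. As the support of d lies in the union of the supports of the
  two vectors, any competitor s of e satisfies n - \<kappa>(X) \<le> |s|_0 + |e|_0, and the sparsity bound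
  2|e|_0 + \<kappa>(X) + 1 \<le> n forces |e|_0 < |s|_0.\<close>

lemma l0norm_diff_le: "l0norm (x - y) \<le> l0norm x + l0norm y"
proof -
  have "{i. (x - y) $ i \<noteq> 0} \<subseteq> {i. x $ i \<noteq> 0} \<union> {i. y $ i \<noteq> 0}"
    by auto
  then have "l0norm (x - y) \<le> card ({i. x $ i \<noteq> 0} \<union> {i. y $ i \<noteq> 0})"
    unfolding l0norm_def by (simp add: card_mono)
  also have "\<dots> \<le> l0norm x + l0norm y"
    unfolding l0norm_def by (rule card_Un_le)
  finally show ?thesis .
qed

lemma card_zeros_le_kappa:
  fixes X :: "real ^ 'p ^ 'n"
  assumes "X *v \<theta> \<noteq> 0"
  shows "card {i. (X *v \<theta>) $ i = 0} \<le> kappa X"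
proof -
  let ?K = "{card M | M :: 'n set. \<exists>\<theta>. X *v \<theta> \<noteq> 0 \<and> (\<forall>i\<in>M. row i X \<bullet> \<theta> = 0)}"
  have "?K \<subseteq> {..CARD('n)}"
    by (auto intro: card_mono)
  then have "finite ?K"
    by (rule finite_subset) simp
  moreover have "\<forall>i\<in>{i. (X *v \<theta>) $ i = 0}. row i X \<bullet> \<theta> = 0"
    by (simp add: matrix_vector_mult_def row_def inner_vec_def)
  ultimately show ?thesis
    unfolding kappa_def using assms by (blast intro: Max_ge)
qed

lemma l0norm_range_ge:
  fixes X :: "real ^ 'p ^ 'n"
  assumes "X *v \<theta> \<noteq> 0"
  shows "CARD('n) - kappa X \<le> l0norm (X *v \<theta>)"
proof -
  let ?Z = "{i. (X *v \<theta>) $ i = 0}"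
  have "l0norm (X *v \<theta>) = card (UNIV - ?Z)"
    unfolding l0norm_def by (simp add: set_diff_eq)
  also have "\<dots> = CARD('n) - card ?Z"
    by (simp add: card_Diff_subset)
  finally show ?thesis
    using card_zeros_le_kappa[OF assms] by linarith
qed

theorem lemma2p1:
  fixes X :: "real ^ 'p ^ 'n" and F :: "real ^ 'n ^ 'm"
    and f :: "real ^ 'p" and e :: "real ^ 'n"
  assumes "CARD('p) < CARD('n)"
    and "rank X = CARD('p)"
    and "{s. F *v s = 0} = range (\<lambda>\<theta>. X *v \<theta>)"
    and "real (l0norm e) \<le> (real CARD('n) - real (kappa X) - 1) / 2"
  shows "F *v e = F *v (X *v f + e) \<and>
         (\<forall>s. F *v s = F *v (X *v f + e) \<and> s \<noteq> e \<longrightarrow> l0norm e < l0norm s)"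
proof -
  have Fy: "F *v e = F *v (X *v f + e)"
    using assms(3) by (auto simp: matrix_vector_right_distrib)
  have "l0norm e < l0norm s" if "F *v s = F *v (X *v f + e)" "s \<noteq> e" for s
  proof -
    have "F *v (s - e) = 0"
      using that(1) Fy by (simp add: matrix_vector_mult_diff_distrib)
    then obtain \<theta> where \<theta>: "s - e = X *v \<theta>"
      using assms(3) by blast
    with that(2) have "X *v \<theta> \<noteq> 0"
      by auto
    then have "CARD('n) - kappa X \<le> l0norm s + l0norm e"
      using l0norm_range_ge l0norm_diff_le \<theta> by (metis order_trans)
    moreover have "real (2 * l0norm e + kappa X + 1) \<le> real CARD('n)"
      using assms(4) by simp
    ultimately show ?thesis
      by linarith
  qed
  with Fy show ?thesis
    by blast
qed

end
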